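(* Let $n\ge1$, let $\boldsymbol{L}\in\mathbb{R}^{n\times n}$ be Hurwitz, and for $m=1,\dots,n$ let $\boldsymbol{R}_m\in\mathbb{R}^{n\times n}$ be symmetric; define $\boldsymbol{\Upsilon}:\mathbb{R}^n\to\mathbb{R}^n$ by $\Upsilon_m(\boldsymbol{a})=\boldsymbol{a}^T\boldsymbol{R}_m\boldsymbol{a}$, with $\boldsymbol{a}^T\boldsymbol{\Upsilon}(\boldsymbol{a})=0$ for all $\boldsymbol{a}$. Consider the input-output system $$\dot{\boldsymbol{a}}=\boldsymbol{L}\boldsymbol{a}+\boldsymbol{\Upsilon}(\boldsymbol{a})+\boldsymbol{f}(t),\qquad\boldsymbol{y}=\boldsymbol{a},\qquad\boldsymbol{a}(0)=\boldsymbol{a}_0.$$ Let $\delta>0$ and let $D\subseteq\mathbb{R}^n$ contain $\{\boldsymbol{a}:\|\boldsymbol{a}\|\le\delta\}$. Suppose there exist a symmetric matrix $\boldsymbol{P}_{\text{SOS}}\in\mathbb{R}^{n\times n}$, a scalar $\varepsilon>0$ and a matrix $\boldsymbol{Q}\succeq0$ such that, with $V_{\text{SOS}}(\boldsymbol{a}):=\boldsymbol{a}^T\boldsymbol{P}_{\text{SOS}}\boldsymbol{a}$, for all $\boldsymbol{a}\in D$: $$V_{\text{SOS}}(\boldsymbol{a})-\varepsilon\boldsymbol{a}^T\boldsymbol{a}\ge0,\qquad -\Big(\tfrac{\partial V_{\text{SOS}}}{\partial\boldsymbol{a}}(\boldsymbol{L}\boldsymbol{a}+\boldsymbol{\Upsilon}(\boldsymbol{a}))+(\delta^2-\boldsymbol{a}^T\boldsymbol{a})\,\boldsymbol{a}^T\boldsymbol{Q}\boldsymbol{a}+\varepsilon\boldsymbol{a}^T\boldsymbol{a}\Big)\ge0.$$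 Let $\lambda_{\min},\lambda_{\max}$ denote the extreme eigenvalues of $\boldsymbol{P}_{\text{SOS}}$ and $\|2\boldsymbol{P}_{\text{SOS}}\|$ the spectral norm of $2\boldsymbol{P}_{\text{SOS}}$. Then for each $\boldsymbol{a}_0$ with $\|\boldsymbol{a}_0\|\le\delta\sqrt{\lambda_{\min}/\lambda_{\max}}$ the system is small-signal finite-gain $\mathcal{L}_p$ stable for each $p\in[1,\infty]$. In particular, for each $\tau\ge0$ and each $\boldsymbol{f}\in\mathcal{L}_{pe}$ with $$\sup_{0\le t\le\tau}\|\boldsymbol{f}(t)\|\le\frac{\lambda_{\min}\,\varepsilon\,\delta}{\lambda_{\max}\,\|2\boldsymbol{P}_{\text{SOS}}\|},$$ the state satisfies $\|\boldsymbol{a}(t)\|\le\delta$ for all $t\in[0,\tau]$ and the output satisfies $\|\boldsymbol{y}_\tau\|_{\mathcal{L}_p}\le\gamma_{\text{SOS}}\|\boldsymbol{f}_\tau\|_{\mathcal{L}_p}+\beta_{\text{SOS}}$, where $$\gamma_{\text{SOS}}=\frac{\lambda_{\max}\|2\boldsymbol{P}_{\text{SOS}}\|}{\lambda_{\min}\,\varepsilon},\qquad\beta_{\text{SOS}}=\|\boldsymbol{a}_0\|\sqrt{\frac{\lambda_{\max}}{\lambda_{\min}}}\,\rho,\qquad\rho=\begin{cases}1,&p=\infty,\\ \left(\frac{2\lambda_{\max}}{\varepsilon p}\right)^{1/p},&p\in[1,\infty).\end{cases}$$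
   Context: $\|\cdot\|$ denotes the Euclidean norm on $\mathbb{R}^n$. For a signal $\boldsymbol{g}:[0,\infty)\to\mathbb{R}^n$ and $\tau\ge0$, the truncation is $\boldsymbol{g}_\tau(t)=\boldsymbol{g}(t)$ for $0\le t\le\tau$ and $\boldsymbol{g}_\tau(t)=\boldsymbol{0}$ for $t>\tau$. For $p\in[1,\infty)$, $\|\boldsymbol{g}\|_{\mathcal{L}_p}=(\int_0^\infty\|\boldsymbol{g}(t)\|^p\,dt)^{1/p}$, and $\|\boldsymbol{g}\|_{\mathcal{L}_\infty}=\sup_{t\ge0}\|\boldsymbol{g}(t)\|$. $\mathcal{L}_p$ is the set of piecewise continuous $\boldsymbol{g}:[0,\infty)\to\mathbb{R}^n$ with finite $\mathcal{L}_p$ norm, and $\mathcal{L}_{pe}=\{\boldsymbol{g}:\boldsymbol{g}_\tau\in\mathcal{L}_p\ \forall\tau\in[0,\infty)\}$. A matrix is Hurwitz if all its eigenvalues have negative real part. "Small-signal finite-gain $\mathcal{L}_p$ stable" means there exist constants $r>0$, $\gamma\ge0$, $\beta\ge0$ such that every input with $\sup_{0\le t\le\tau}\|\boldsymbol{f}(t)\|\le r$ yields $\|\boldsymbol{y}_\tau\|_{\mathcal{L}_p}\le\gamma\|\boldsymbol{f}_\tau\|_{\mathcal{L}_p}+\beta$; the explicit bounds are given in the claim. *)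

theory Defs
  imports "HOL-Analysis.Analysis"
begin

definition hurwitz :: "real^'n^'n \<Rightarrow> bool" where
  "hurwitz L \<longleftrightarrow> (\<forall>z::complex.
     det ((\<chi> i j. (if i = j then z else 0) - complex_of_real (L $ i $ j)) :: complex^'n^'n) = 0
       \<longrightarrow> Re z < 0)"

definition symmetric_mat :: "real^'n^'n \<Rightarrow> bool" where
  "symmetric_mat A \<longleftrightarrow> transpose A = A"

definition psd :: "real^'n^'n \<Rightarrow> bool" where
  "psd A \<longleftrightarrow> symmetric_mat A \<and> (\<forall>x. 0 \<le> x \<bullet> (A *v x))"

text \<open>Real eigenvalues of a real matrix (all eigenvalues, for a symmetric matrix).\<close>
definition eigvals :: "real^'n^'n \<Rightarrow> real set" where
  "eigvals A = {l. \<exists>v. v \<noteq> 0 \<and> A *v v = l *\<^sub>R v}"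

definition lambda_min :: "real^'n^'n \<Rightarrow> real" where
  "lambda_min A = Min (eigvals A)"

definition lambda_max :: "real^'n^'n \<Rightarrow> real" where
  "lambda_max A = Max (eigvals A)"

text \<open>Spectral norm = operator norm induced by the Euclidean norm.\<close>
definition spec_norm :: "real^'n^'n \<Rightarrow> real" where
  "spec_norm A = onorm (\<lambda>x. A *v x)"

definition Upsilon :: "('n \<Rightarrow> real^'n^'n) \<Rightarrow> real^'n \<Rightarrow> real^'n" where
  "Upsilon R a = (\<chi> m. a \<bullet> (R m *v a))"

definition trunc :: "real \<Rightarrow> (real \<Rightarrow> 'a::zero) \<Rightarrow> real \<Rightarrow> 'a" where
  "trunc \<tau> g t = (if t \<le> \<tau> then g t else 0)"

definition piecewise_cont :: "(real \<Rightarrow> 'a::real_normed_vector) \<Rightarrow> bool" where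
  "piecewise_cont g \<longleftrightarrow> (\<forall>T\<ge>0. \<exists>S. finite S \<and>
     (\<forall>t\<in>{0..T} - S. continuous (at t within {0..}) g) \<and>
     (\<forall>s\<in>S. (\<exists>r. (g \<longlongrightarrow> r) (at_right s)) \<and> (0 < s \<longrightarrow> (\<exists>l. (g \<longlongrightarrow> l) (at_left s)))))"

definition Lp_norm :: "ereal \<Rightarrow> (real \<Rightarrow> 'a::real_normed_vector) \<Rightarrow> real" where
  "Lp_norm p g = (if p = \<infinity> then Sup ((\<lambda>t. norm (g t)) ` {0..})
     else (LINT t:{0..}|lborel. norm (g t) powr real_of_ereal p) powr (1 / real_of_ereal p))"

definition in_Lp :: "ereal \<Rightarrow> (real \<Rightarrow> 'a::real_normed_vector) \<Rightarrow> bool" where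
  "in_Lp p g \<longleftrightarrow> piecewise_cont g \<and>
     (if p = \<infinity> then bdd_above ((\<lambda>t. norm (g t)) ` {0..})
      else set_integrable lborel {0..} (\<lambda>t. norm (g t) powr real_of_ereal p))"

definition in_Lpe :: "ereal \<Rightarrow> (real \<Rightarrow> 'a::real_normed_vector) \<Rightarrow> bool" where
  "in_Lpe p g \<longleftrightarrow> (\<forall>\<tau>\<ge>0. in_Lp p (trunc \<tau> g))"

definition rho :: "ereal \<Rightarrow> real \<Rightarrow> real \<Rightarrow> real" where
  "rho p lmax \<epsilon> = (if p = \<infinity> then 1
     else (2 * lmax / (\<epsilon> * real_of_ereal p)) powr (1 / real_of_ereal p))"

end

theory Submission
  imports Defs
begin

text \<open>The Lyapunov function \<open>V a = a\<^sup>T P a\<close> lies between \<open>lmin |a|\<^sup>2\<close> and \<open>lmax |a|\<^sup>2\<close>,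
  where \<open>lmin\<close>, \<open>lmax\<close> are the extreme eigenvalues of \<open>P\<close>, and on the ball of radius \<open>\<delta>\<close> the certificate gives
  \<open>dV/dt \<le> - \<epsilon> |a|\<^sup>2 + \<parallel>2P\<parallel> |a| |f|\<close>.  The small-signal bound on \<open>f\<close> makes this rate
  nonpositive on the level set \<open>V = lmin \<delta>\<^sup>2\<close>, so a barrier argument keeps the state in
  \<open>{V \<le> lmin \<delta>\<^sup>2}\<close>, which lies in the ball; the same argument at a higher level gives the \<open>L\<^sub>\<infinity>\<close> bound.  For finite \<open>p\<close>,
  differentiating \<open>(V + \<eta>)\<^bsup>p/2\<^esup>\<close> and splitting the forcing term by a weighted Young
  inequality yields an energy estimate for every weight \<open>\<theta> > 0\<close>; optimising \<open>\<theta>\<close> and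
  letting \<open>\<eta> \<rightarrow> 0\<close> gives the \<open>L\<^sub>p\<close> bound with the stated constants.\<close>

section \<open>Symmetric matrices and their extreme eigenvalues\<close>

lemma symmetric_mat_inner_commute:
  assumes "symmetric_mat P"
  shows "x \<bullet> (P *v y) = (P *v x) \<bullet> y"
proof -
  have "x \<bullet> (P *v y) = (x v* P) \<bullet> y" by (simp add: dot_lmul_matrix)
  also have "x v* P = P *v x"
    using assms unfolding symmetric_mat_def by (metis vector_transpose_matrix)
  finally show ?thesis .
qed

lemma symmetric_mat_uminus: "symmetric_mat P \<Longrightarrow> symmetric_mat (- P)"
  unfolding symmetric_mat_def by (simp add: transpose_def vec_eq_iff)

lemma uminus_matrix_vector_mult: "(- P) *v x = - (P *v (x::real^'n))"
  by (simp add: matrix_vector_mult_def vec_eq_iff sum_negf)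

lemma quadratic_form_add_scaleR:
  assumes "symmetric_mat P"
  shows "(v + t *\<^sub>R w) \<bullet> (P *v (v + t *\<^sub>R w)) =
     v \<bullet> (P *v v) + 2 * t * (w \<bullet> (P *v v)) + t\<^sup>2 * (w \<bullet> (P *v w))"
proof -
  have "v \<bullet> (P *v w) = w \<bullet> (P *v v)"
    using symmetric_mat_inner_commute[OF assms] by (simp add: inner_commute)
  then show ?thesis
    by (simp add: algebra_simps power2_eq_square)
qed

lemma linear_coeff_eq_0_if_quadratic_nonpos:
  fixes b c :: real
  assumes "\<And>t. 2 * t * b + t\<^sup>2 * c \<le> 0"
  shows "b = 0"
proof (rule ccontr)
  assume "b \<noteq> 0"
  define d where "d = \<bar>c\<bar> + 1"
  have d: "d > 0" "2 * d + c > 0" unfolding d_def by auto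
  have "2 * (b/d) * b + (b/d)\<^sup>2 * c = b\<^sup>2 * (2 * d + c) / d\<^sup>2"
    using d by (simp add: field_simps power2_eq_square)
  also have "\<dots> > 0" using d \<open>b \<noteq> 0\<close> by (simp add: divide_pos_pos)
  finally show False using assms[of "b/d"] by simp
qed

text \<open>Perturbing \<open>v\<close> along \<open>w = P v - l v\<close> cannot increase the Rayleigh quotient,
  which forces \<open>w = 0\<close>.\<close>
lemma rayleigh_maximizer_eigenvector:
  assumes sym: "symmetric_mat P"
    and bound: "\<And>x. x \<bullet> (P *v x) \<le> l * (x \<bullet> x)"
    and attained: "v \<bullet> (P *v v) = l * (v \<bullet> v)"
  shows "P *v v = l *\<^sub>R v"
proof -
  define w where "w = P *v v - l *\<^sub>R v"
  have "2 * t * (w \<bullet> (P *v v) - l * (w \<bullet> v)) + t\<^sup>2 * (w \<bullet> (P *v w) - l * (w \<bullet> w)) \<le> 0" for t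
    using bound[of "v + t *\<^sub>R w"]
    unfolding quadratic_form_add_scaleR[OF sym] attained
    by (simp add: algebra_simps power2_eq_square inner_commute)
  then have "w \<bullet> (P *v v) - l * (w \<bullet> v) = 0"
    by (rule linear_coeff_eq_0_if_quadratic_nonpos)
  then have "w \<bullet> w = 0"
    by (simp add: w_def algebra_simps inner_commute)
  then show ?thesis by (simp add: w_def)
qed

lemma symmetric_mat_max_eigenpair:
  fixes P :: "real^'n^'n"
  assumes sym: "symmetric_mat P"
  obtains l v where "v \<noteq> 0" "P *v v = l *\<^sub>R v" "\<And>x. x \<bullet> (P *v x) \<le> l * (x \<bullet> x)"
proof -
  let ?q = "\<lambda>x::real^'n. x \<bullet> (P *v x)"
  have cont: "continuous_on (sphere 0 1) ?q"
    by (intro continuous_intros linear_continuous_on) auto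
  have "sphere (0::real^'n) 1 \<noteq> {}" by simp
  then obtain v where v: "v \<in> sphere 0 1" and vmax: "\<And>y. y \<in> sphere 0 1 \<Longrightarrow> ?q y \<le> ?q v"
    using continuous_attains_sup[OF compact_sphere _ cont] by blast
  have vv: "v \<bullet> v = 1" using v by (simp add: dot_square_norm)
  have bound: "?q x \<le> ?q v * (x \<bullet> x)" for x
  proof (cases "x = 0")
    case False
    define u where "u = (1 / norm x) *\<^sub>R x"
    have "u \<in> sphere 0 1" using False by (simp add: u_def)
    have "x = norm x *\<^sub>R u" using False by (simp add: u_def)
    moreover have "?q (c *\<^sub>R u) = c\<^sup>2 * ?q u" for c
      by (simp add: matrix_vector_mult_scaleR power2_eq_square)
    ultimately have "?q x = (norm x)\<^sup>2 * ?q u" by metis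
    also have "\<dots> \<le> (norm x)\<^sup>2 * ?q v" using vmax[OF \<open>u \<in> sphere 0 1\<close>] by (simp add: mult_left_mono)
    finally show ?thesis by (simp add: dot_square_norm mult.commute)
  qed simp
  have "P *v v = ?q v *\<^sub>R v"
    by (rule rayleigh_maximizer_eigenvector[OF sym bound]) (simp add: vv)
  moreover have "v \<noteq> 0" using v by auto
  ultimately show ?thesis using that bound by blast
qed

lemma symmetric_mat_min_eigenpair:
  fixes P :: "real^'n^'n"
  assumes sym: "symmetric_mat P"
  obtains l v where "v \<noteq> 0" "P *v v = l *\<^sub>R v" "\<And>x. l * (x \<bullet> x) \<le> x \<bullet> (P *v x)"
proof -
  obtain l v where "v \<noteq> 0" and eig: "(- P) *v v = l *\<^sub>R v"
    and bound: "\<And>x. x \<bullet> ((- P) *v x) \<le> l * (x \<bullet> x)"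
    using symmetric_mat_max_eigenpair[OF symmetric_mat_uminus[OF sym]] by blast
  show ?thesis
  proof (rule that)
    show "v \<noteq> 0" by fact
    have "P *v v = - ((- P) *v v)" by (simp add: uminus_matrix_vector_mult)
    then show "P *v v = (- l) *\<^sub>R v" by (simp add: eig)
    show "(- l) * (x \<bullet> x) \<le> x \<bullet> (P *v x)" for x
      using bound[of x] by (simp add: uminus_matrix_vector_mult)
  qed
qed

lemma symmetric_mat_eigvals_finite:
  fixes P :: "real^'n^'n"
  assumes sym: "symmetric_mat P"
  shows "finite (eigvals P)"
proof -
  define e where "e l = (SOME v. v \<noteq> 0 \<and> P *v v = l *\<^sub>R v)" for l
  have e: "e l \<noteq> 0 \<and> P *v e l = l *\<^sub>R e l" if "l \<in> eigvals P" for l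
  proof -
    have "\<exists>v. v \<noteq> 0 \<and> P *v v = l *\<^sub>R v" using that by (simp add: eigvals_def)
    then show ?thesis unfolding e_def by (rule someI_ex)
  qed
  have inj: "inj_on e (eigvals P)"
  proof (rule inj_onI)
    fix l m assume l: "l \<in> eigvals P" and m: "m \<in> eigvals P" and "e l = e m"
    then have "l *\<^sub>R e l = m *\<^sub>R e l" using e[OF l] e[OF m] by metis
    then show "l = m" using e[OF l] by auto
  qed
  have "pairwise orthogonal (e ` eigvals P)"
  proof (clarsimp simp: pairwise_def)
    fix l m assume l: "l \<in> eigvals P" and m: "m \<in> eigvals P" and "e l \<noteq> e m"
    then have "l \<noteq> m" by auto
    have "l * (e l \<bullet> e m) = (P *v e l) \<bullet> e m" using e[OF l] by simp
    also have "\<dots> = e l \<bullet> (P *v e m)" using symmetric_mat_inner_commute[OF sym] by simp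
    also have "\<dots> = m * (e l \<bullet> e m)" using e[OF m] by simp
    finally show "orthogonal (e l) (e m)" using \<open>l \<noteq> m\<close> by (simp add: orthogonal_def)
  qed
  moreover have "0 \<notin> e ` eigvals P" using e by auto
  ultimately have "independent (e ` eigvals P)" by (rule pairwise_orthogonal_independent)
  then have "finite (e ` eigvals P)" by (rule independent_imp_finite)
  then show ?thesis using finite_imageD inj by blast
qed

lemma eigval_le_rayleigh_bound:
  assumes "m \<in> eigvals P" "\<And>x. x \<bullet> (P *v x) \<le> l * (x \<bullet> x)"
  shows "m \<le> l"
proof -
  obtain v where "v \<noteq> 0" "P *v v = m *\<^sub>R v" using assms(1) by (auto simp: eigvals_def)
  then show ?thesis using assms(2)[of v] by simp
qed

lemma eigval_ge_rayleigh_bound: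
  assumes "m \<in> eigvals P" "\<And>x. l * (x \<bullet> x) \<le> x \<bullet> (P *v x)"
  shows "l \<le> m"
proof -
  obtain v where "v \<noteq> 0" "P *v v = m *\<^sub>R v" using assms(1) by (auto simp: eigvals_def)
  then show ?thesis using assms(2)[of v] by simp
qed

lemma symmetric_mat_lambda_max:
  assumes "symmetric_mat P"
  shows "x \<bullet> (P *v x) \<le> lambda_max P * (x \<bullet> x)"
proof -
  obtain l v where "v \<noteq> 0" "P *v v = l *\<^sub>R v" and bound: "\<And>x. x \<bullet> (P *v x) \<le> l * (x \<bullet> x)"
    using symmetric_mat_max_eigenpair[OF assms] by blast
  then have "l \<in> eigvals P" by (auto simp: eigvals_def)
  have "lambda_max P = l"
    unfolding lambda_max_def
  proof (rule Max_eqI[OF symmetric_mat_eigvals_finite[OF assms]])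
    show "m \<le> l" if "m \<in> eigvals P" for m
      using that bound by (rule eigval_le_rayleigh_bound)
  qed fact
  then show ?thesis using bound by simp
qed

lemma symmetric_mat_lambda_min:
  assumes "symmetric_mat P"
  shows "lambda_min P \<in> eigvals P" "lambda_min P * (x \<bullet> x) \<le> x \<bullet> (P *v x)"
proof -
  obtain l v where "v \<noteq> 0" "P *v v = l *\<^sub>R v" and bound: "\<And>x. l * (x \<bullet> x) \<le> x \<bullet> (P *v x)"
    using symmetric_mat_min_eigenpair[OF assms] by blast
  then have "l \<in> eigvals P" by (auto simp: eigvals_def)
  have "lambda_min P = l"
    unfolding lambda_min_def
  proof (rule Min_eqI[OF symmetric_mat_eigvals_finite[OF assms]])
    show "l \<le> m" if "m \<in> eigvals P" for m
      using that bound by (rule eigval_ge_rayleigh_bound)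
  qed fact
  then show "lambda_min P \<in> eigvals P" "lambda_min P * (x \<bullet> x) \<le> x \<bullet> (P *v x)"
    using \<open>l \<in> eigvals P\<close> bound by simp_all
qed

lemma lambda_min_le_lambda_max:
  assumes "symmetric_mat P"
  shows "lambda_min P \<le> lambda_max P"
  using symmetric_mat_lambda_min(1)[OF assms] symmetric_mat_lambda_max[OF assms]
  by (rule eigval_le_rayleigh_bound)

lemma symmetric_mat_scalar_if_lambda_min_eq_max:
  assumes sym: "symmetric_mat P" and eq: "lambda_min P = lambda_max P"
  shows "P *v x = lambda_min P *\<^sub>R x"
proof (rule rayleigh_maximizer_eigenvector[OF sym])
  show upper: "y \<bullet> (P *v y) \<le> lambda_min P * (y \<bullet> y)" for y
    using symmetric_mat_lambda_max[OF sym] eq by simp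
  show "x \<bullet> (P *v x) = lambda_min P * (x \<bullet> x)"
    using upper symmetric_mat_lambda_min(2)[OF sym] by (rule order_antisym)
qed

lemma matrix_vector_inner_le_spec_norm:
  "(A *v x) \<bullet> y \<le> spec_norm A * norm x * norm y"
proof -
  have "(A *v x) \<bullet> y \<le> norm (A *v x) * norm y" by (rule norm_cauchy_schwarz)
  also have "norm (A *v x) \<le> spec_norm A * norm x"
    unfolding spec_norm_def by (rule onorm) simp
  finally show ?thesis by (simp add: mult_right_mono)
qed

section \<open>Derivatives along solutions and a barrier principle\<close>

lemma has_real_derivative_quadratic_form:
  fixes P :: "real^'n^'n" and x :: "real \<Rightarrow> real^'n"
  assumes sym: "symmetric_mat P" and deriv: "(x has_vector_derivative x') (at t)"
  shows "((\<lambda>t. x t \<bullet> (P *v x t)) has_real_derivative (2 *\<^sub>R (P *v x t)) \<bullet> x') (at t)"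
proof -
  have "((\<lambda>t. P *v x t) has_vector_derivative P *v x') (at t)"
    by (rule bounded_linear.has_vector_derivative[OF matrix_vector_mul_bounded_linear deriv])
  then have "((\<lambda>t. x t \<bullet> (P *v x t)) has_vector_derivative x t \<bullet> (P *v x') + x' \<bullet> (P *v x t)) (at t)"
    by (rule bounded_bilinear.has_vector_derivative[OF bounded_bilinear_inner deriv])
  moreover have "x t \<bullet> (P *v x') + x' \<bullet> (P *v x t) = (2 *\<^sub>R (P *v x t)) \<bullet> x'"
    using symmetric_mat_inner_commute[OF sym, of "x t" x'] by (simp add: inner_commute)
  ultimately show ?thesis by (simp add: has_real_derivative_iff_has_vector_derivative)
qed

lemma has_vector_derivative_if_integral_eq:
  fixes x F :: "real \<Rightarrow> 'a::banach"
  assumes integral: "\<And>u. u \<in> {a..b} \<Longrightarrow> (F has_integral (x u - x a)) {a..u}"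
    and t: "t \<in> {a<..<b}" and cont: "continuous (at t within {a..b}) F"
  shows "(x has_vector_derivative F t) (at t)"
proof -
  have "F integrable_on {a..b}" using integral[of b] t by (simp add: has_integral_integrable)
  then have "((\<lambda>u. integral {a..u} F) has_vector_derivative F t) (at t within {a..b})"
    using integral_has_vector_derivative_continuous_at[of F a b t "{}"] t cont by simp
  then have deriv: "((\<lambda>u. integral {a..u} F + x a) has_vector_derivative F t) (at t within {a..b})"
    by (simp only: has_vector_derivative_add_const)
  have eq: "x u = integral {a..u} F + x a" if "u \<in> {a..b}" for u
    using integral_unique[OF integral[OF that]] by simp
  have "(x has_vector_derivative F t) (at t within {a..b})"
    by (rule has_vector_derivative_transform[OF _ eq deriv]) (use t in auto)
  then show ?thesis using t by (simp add: at_within_Icc_at)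
qed

text \<open>The derivative is masked off the exceptional set so that the integral
  comparison holds everywhere.\<close>
lemma DERIV_nonpos_imp_decreasing_finite:
  fixes \<phi> D :: "real \<Rightarrow> real"
  assumes "x \<le> y" and cont: "continuous_on {x..y} \<phi>" and "finite S"
    and deriv: "\<And>u. u \<in> {x<..<y} - S \<Longrightarrow> (\<phi> has_real_derivative D u) (at u)"
    and nonpos: "\<And>u. u \<in> {x<..<y} - S \<Longrightarrow> D u \<le> 0"
  shows "\<phi> y \<le> \<phi> x"
proof -
  define D' where "D' u = (if u \<in> {x<..<y} - S then D u else 0)" for u
  have "(D' has_integral (\<phi> y - \<phi> x)) {x..y}"
    by (rule fundamental_theorem_of_calculus_interior_strong[OF \<open>finite S\<close> \<open>x \<le> y\<close> _ cont])
      (use deriv in \<open>auto simp: D'_def has_real_derivative_iff_has_vector_derivative\<close>)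
  moreover have "((\<lambda>_. 0::real) has_integral 0) {x..y}" by simp
  ultimately have "\<phi> y - \<phi> x \<le> 0"
    by (rule has_integral_le) (simp add: D'_def nonpos)
  then show ?thesis by simp
qed

lemma last_crossing:
  fixes \<phi> :: "real \<Rightarrow> real"
  assumes "x \<le> y" and cont: "continuous_on {x..y} \<phi>" and below: "\<phi> x \<le> M" and above: "M < \<phi> y"
  obtains c where "c \<in> {x..<y}" "\<phi> c = M" "\<And>u. u \<in> {c..y} \<Longrightarrow> M \<le> \<phi> u"
proof -
  define C where "C = {u \<in> {x..y}. \<phi> u \<le> M}"
  have "closed C" unfolding C_def by (rule continuous_on_closed_Collect_le[OF cont]) auto
  moreover have "x \<in> C" using below \<open>x \<le> y\<close> by (simp add: C_def)
  moreover have "bdd_above C" by (auto simp: C_def bdd_above_def)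
  ultimately have "Sup C \<in> C" by (intro closed_contains_Sup) auto
  have ub: "u \<le> Sup C" if "u \<in> C" for u by (rule cSup_upper[OF that \<open>bdd_above C\<close>])
  define c where "c = Sup C"
  have c: "c \<in> {x..y}" "\<phi> c \<le> M" using \<open>Sup C \<in> C\<close> by (auto simp: C_def c_def)
  have "c \<noteq> y" using c above by auto
  then have "c < y" using c by simp
  have cont': "continuous_on {c..y} \<phi>" by (rule continuous_on_subset[OF cont]) (use c in auto)
  obtain w where w: "c \<le> w" "w \<le> y" "\<phi> w = M"
    using IVT'[of \<phi> c M y, OF _ _ _ cont'] c above \<open>c < y\<close> by auto
  have "w \<in> C" using w c by (auto simp: C_def)
  then have "w = c" using ub w by (force simp: c_def)
  have "M \<le> \<phi> u" if "u \<in> {c..y}" for u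
  proof (cases "u = c")
    case False
    then have "u \<notin> C" using ub that by (force simp: c_def)
    then show ?thesis using that c by (auto simp: C_def)
  qed (use w \<open>w = c\<close> in simp)
  then show ?thesis using that c \<open>c < y\<close> w \<open>w = c\<close> by auto
qed

lemma first_exit:
  fixes \<phi> :: "real \<Rightarrow> real"
  assumes cont: "continuous_on {0..T} \<phi>" and init: "\<phi> 0 \<le> M"
    and t: "t \<in> {0..T}" "M < \<phi> t"
  obtains s where "s \<in> {0..<t}" "\<And>u. u \<in> {0..s} \<Longrightarrow> \<phi> u \<le> M"
    "\<And>h. h > 0 \<Longrightarrow> \<exists>u\<in>{s<..<s+h}. u \<in> {0..T} \<and> M < \<phi> u"
proof -
  define E where "E = {u \<in> {0..T}. M < \<phi> u}"
  define s where "s = Inf E"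
  have "t \<in> E" and "bdd_below E" using t by (auto simp: E_def bdd_below_def)
  have "0 \<le> s" unfolding s_def by (rule cInf_greatest) (use \<open>t \<in> E\<close> in \<open>auto simp: E_def\<close>)
  have "s \<le> t" unfolding s_def by (rule cInf_lower[OF \<open>t \<in> E\<close> \<open>bdd_below E\<close>])
  have "{0..<s} \<subseteq> {u \<in> {0..T}. \<phi> u \<le> M}"
  proof
    fix u assume u: "u \<in> {0..<s}"
    then have "u \<notin> E" using cInf_lower[OF _ \<open>bdd_below E\<close>, of u] by (auto simp: s_def)
    then show "u \<in> {u \<in> {0..T}. \<phi> u \<le> M}" using u \<open>s \<le> t\<close> t by (auto simp: E_def)
  qed
  moreover have "closed {u \<in> {0..T}. \<phi> u \<le> M}"
    by (rule continuous_on_closed_Collect_le[OF cont]) auto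
  ultimately have "closure {0..<s} \<subseteq> {u \<in> {0..T}. \<phi> u \<le> M}"
    by (rule closure_minimal)
  then have below: "\<phi> u \<le> M" if "u \<in> {0..s}" for u
    using that init by (cases "s = 0") auto
  then have "s < t" using t \<open>0 \<le> s\<close> \<open>s \<le> t\<close> by force
  have "\<exists>u\<in>{s<..<s+h}. u \<in> {0..T} \<and> M < \<phi> u" if "h > 0" for h
  proof -
    obtain u where "u \<in> E" "u < s + h"
      using cInf_less_iff[of E "s + h"] \<open>t \<in> E\<close> \<open>bdd_below E\<close> \<open>h > 0\<close> by (auto simp: s_def)
    moreover have "s \<le> u" unfolding s_def by (rule cInf_lower[OF \<open>u \<in> E\<close> \<open>bdd_below E\<close>])
    moreover have "u \<noteq> s" using below[of s] \<open>u \<in> E\<close> \<open>0 \<le> s\<close> by (auto simp: E_def)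
    ultimately show ?thesis by (auto simp: E_def)
  qed
  then show ?thesis using that \<open>0 \<le> s\<close> \<open>s < t\<close> below by auto
qed

lemma barrier_principle:
  fixes \<phi> D :: "real \<Rightarrow> real"
  assumes cont: "continuous_on {0..T} \<phi>" and "finite S"
    and deriv: "\<And>u. u \<in> {0<..<T} - S \<Longrightarrow> (\<phi> has_real_derivative D u) (at u)"
    and init: "\<phi> 0 \<le> M"
    and near: "\<And>s. s \<in> {0..<T} \<Longrightarrow> (\<And>u. u \<in> {0..s} \<Longrightarrow> \<phi> u \<le> M) \<Longrightarrow>
       \<forall>\<^sub>F u in at s within {0..T}. M \<le> \<phi> u \<longrightarrow> D u \<le> 0"
    and t: "t \<in> {0..T}"
  shows "\<phi> t \<le> M"
proof (rule ccontr)
  assume "\<not> \<phi> t \<le> M"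
  then obtain s where s: "s \<in> {0..<t}" and below: "\<And>u. u \<in> {0..s} \<Longrightarrow> \<phi> u \<le> M"
    and exits: "\<And>h. h > 0 \<Longrightarrow> \<exists>u\<in>{s<..<s+h}. u \<in> {0..T} \<and> M < \<phi> u"
    using first_exit[OF cont init t] by auto
  have "\<forall>\<^sub>F u in at s within {0..T}. M \<le> \<phi> u \<longrightarrow> D u \<le> 0"
    by (rule near) (use s t below in auto)
  then obtain d where "d > 0"
    and d: "\<And>u. u \<in> {0..T} \<Longrightarrow> u \<noteq> s \<Longrightarrow> dist u s < d \<Longrightarrow> M \<le> \<phi> u \<Longrightarrow> D u \<le> 0"
    unfolding eventually_at by auto
  obtain t1 where t1: "t1 \<in> {s<..<s+d}" "t1 \<in> {0..T}" "M < \<phi> t1"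
    using exits[OF \<open>d > 0\<close>] by blast
  have cont': "continuous_on {s..t1} \<phi>" by (rule continuous_on_subset[OF cont]) (use s t1 in auto)
  obtain c where c: "c \<in> {s..<t1}" "\<phi> c = M" and above: "\<And>u. u \<in> {c..t1} \<Longrightarrow> M \<le> \<phi> u"
    using last_crossing[OF _ cont' below[of s] t1(3)] s t1 by auto
  have "\<phi> t1 \<le> \<phi> c"
  proof (rule DERIV_nonpos_imp_decreasing_finite[where \<phi> = \<phi> and D = D, OF _ _ \<open>finite S\<close>])
    show "continuous_on {c..t1} \<phi>" by (rule continuous_on_subset[OF cont']) (use c in auto)
    show "(\<phi> has_real_derivative D u) (at u)" if "u \<in> {c<..<t1} - S" for u
      using deriv that c s t1 by auto
    show "D u \<le> 0" if "u \<in> {c<..<t1} - S" for u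
      using d[of u] above[of u] that c s t1 by (auto simp: dist_real_def)
  qed (use c in auto)
  then show False using c t1 by simp
qed

section \<open>Real inequalities and truncated integrals\<close>

lemma sqrt_powr: "w \<ge> 0 \<Longrightarrow> sqrt w powr q = w powr (q / 2)"
  by (simp add: powr_half_sqrt[symmetric] powr_powr)

lemma Young_powr_weighted:
  fixes x y \<theta> p :: real
  assumes x: "x > 0" and y: "y \<ge> 0" and \<theta>: "\<theta> > 0" and p: "p \<ge> 1"
  shows "p * x powr (p - 1) * y \<le> (p - 1) * \<theta> * x powr p + \<theta> powr (1 - p) * y powr p"
proof (cases "p = 1 \<or> y = 0")
  case True
  then show ?thesis using x y \<theta> p by auto
next
  case False
  then have p1: "p > 1" and y0: "y > 0" using p y by auto
  define a where "a = \<theta> * x powr p"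
  define b where "b = \<theta> powr (1 - p) * y powr p"
  have "a > 0" "b > 0" using \<theta> x y0 by (auto simp: a_def b_def)
  have "a powr ((p - 1) / p) * b powr (1 / p) \<le> ((p - 1) / p) * a + (1 / p) * b"
    by (rule Youngs_inequality_0) (use p1 \<open>a > 0\<close> \<open>b > 0\<close> in \<open>auto simp: field_simps\<close>)
  moreover have "a powr ((p - 1) / p) * b powr (1 / p) = x powr (p - 1) * y"
  proof -
    have "a powr ((p - 1) / p) = \<theta> powr ((p - 1) / p) * x powr (p - 1)"
      using \<theta> x p1 by (simp add: a_def powr_mult powr_powr)
    moreover have "b powr (1 / p) = \<theta> powr ((1 - p) / p) * y"
      using \<theta> y0 p1 by (simp add: b_def powr_mult powr_powr)
    moreover have "\<theta> powr ((p - 1) / p) * \<theta> powr ((1 - p) / p) = 1"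
      using \<theta> by (simp add: powr_add[symmetric] add_divide_distrib[symmetric])
    ultimately show ?thesis by (simp add: algebra_simps)
  qed
  ultimately have "p * (x powr (p - 1) * y) \<le> p * (((p - 1) / p) * a + (1 / p) * b)"
    using p1 by (simp add: mult_left_mono)
  also have "\<dots> = (p - 1) * a + b" using p1 by (simp add: field_simps)
  finally show ?thesis by (simp add: a_def b_def mult.assoc)
qed

lemma weighted_powr_sum_le:
  fixes A B p :: real
  assumes A: "A > 0" and B: "B \<ge> 0" and p: "p \<ge> 1"
  shows "p * B powr p + A powr p * (A / (A + B)) powr (1 - p) \<le> (p - (p - 1) * (A / (A + B))) * (A + B) powr p"
proof -
  have AB: "A + B > 0" using A B by simp
  have "A powr p * (A / (A + B)) powr (1 - p) = A powr p * A powr (1 - p) * (1 / (A + B) powr (1 - p))"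
    using A AB by (simp add: powr_divide)
  also have "A powr p * A powr (1 - p) = A" using A by (simp add: powr_add[symmetric])
  also have "1 / (A + B) powr (1 - p) = (A + B) powr (p - 1)"
    by (metis minus_diff_eq powr_minus inverse_eq_divide)
  finally have e1: "A powr p * (A / (A + B)) powr (1 - p) = A * (A + B) powr (p - 1)" .
  have "(A + B) powr p = (A + B) * (A + B) powr (p - 1)"
    using AB by (simp add: powr_diff)
  then have e2: "(p - (p - 1) * (A / (A + B))) * (A + B) powr p = (p * B + A) * (A + B) powr (p - 1)"
    using AB by (simp add: field_simps)
  have e3: "B powr p \<le> B * (A + B) powr (p - 1)"
  proof (cases "B = 0")
    case False
    then have "B powr p = B * B powr (p - 1)" using B by (simp add: powr_diff)
    also have "\<dots> \<le> B * (A + B) powr (p - 1)"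
      using B A p by (intro mult_left_mono powr_mono2) auto
    finally show ?thesis .
  qed simp
  show ?thesis unfolding e1 e2 using e3 p by (simp add: algebra_simps mult_left_mono)
qed

text \<open>The estimate is used with \<open>\<theta> = (k / c) u\<close>, \<open>u = (\<alpha> + \<eta>) / (\<alpha> + \<eta> + B)\<close> and
  \<open>\<alpha> = c G / k\<close>, which minimises the right-hand side up to the slack \<open>\<eta> > 0\<close>; the slack
  keeps \<open>\<theta>\<close> positive when \<open>G = 0\<close>.\<close>
lemma le_powr_if_weighted_estimates:
  fixes I k c p B G R \<eta> :: real
  assumes k: "k > 0" and c: "c > 0" and p: "p \<ge> 1" and B: "B \<ge> 0" and G: "G \<ge> 0"
    and R: "R \<ge> 0" and \<eta>: "\<eta> > 0"
    and est: "\<And>\<theta>. \<theta> > 0 \<Longrightarrow> (p * k - c * (p - 1) * \<theta>) * I \<le> k * p * B powr p + c * \<theta> powr (1 - p) * G powr p + R"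
  shows "I \<le> (c * G / k + \<eta> + B) powr p + R / k"
proof -
  define \<alpha> where "\<alpha> = c * G / k"
  define u where "u = (\<alpha> + \<eta>) / (\<alpha> + \<eta> + B)"
  define q where "q = p - (p - 1) * u"
  have "\<alpha> \<ge> 0" using c G k by (simp add: \<alpha>_def)
  have u: "u > 0" "u \<le> 1" using \<open>\<alpha> \<ge> 0\<close> \<eta> B by (auto simp: u_def)
  have "q \<ge> 1"
    using mult_left_mono[OF u(2), of "p - 1"] p by (simp add: q_def)
  have weight: "c * ((k / c) * u) powr (1 - p) * G powr p = k * \<alpha> powr p * u powr (1 - p)"
    using k c G u by (simp add: \<alpha>_def powr_mult powr_divide powr_diff field_simps)
  have opt: "p * B powr p + (\<alpha> + \<eta>) powr p * u powr (1 - p) \<le> q * (\<alpha> + \<eta> + B) powr p"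
    unfolding u_def q_def by (rule weighted_powr_sum_le) (use \<open>\<alpha> \<ge> 0\<close> \<eta> B p in auto)
  have "p * k - c * (p - 1) * ((k / c) * u) = k * q" using c by (simp add: q_def field_simps)
  then have "k * q * I \<le> k * p * B powr p + k * \<alpha> powr p * u powr (1 - p) + R"
    using est[of "(k / c) * u"] k c u weight by simp
  also have "\<dots> \<le> k * p * B powr p + k * (\<alpha> + \<eta>) powr p * u powr (1 - p) + R"
    using \<open>\<alpha> \<ge> 0\<close> \<eta> k p by (intro add_mono order_refl mult_right_mono mult_left_mono powr_mono2) auto
  also have "\<dots> \<le> k * q * (\<alpha> + \<eta> + B) powr p + R"
    using mult_left_mono[OF opt less_imp_le[OF k]] by (simp add: algebra_simps)
  finally have "k * q * I \<le> k * q * (\<alpha> + \<eta> + B) powr p + R" by simp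
  then have "I \<le> (\<alpha> + \<eta> + B) powr p + R / (k * q)"
    using k \<open>q \<ge> 1\<close> by (simp add: field_simps)
  also have "R / (k * q) \<le> R / k"
    using k \<open>q \<ge> 1\<close> R by (intro divide_left_mono) (auto intro: mult_pos_pos)
  finally show ?thesis by (simp add: \<alpha>_def)
qed

text \<open>With \<open>x\<^sup>2 = V + \<eta>\<close> and \<open>r\<close> the rate of \<open>V\<close>, the left-hand side is the rate of \<open>x\<^bsup>p\<^esup>\<close>.\<close>
lemma powr_rate_bound:
  fixes x \<eta> r g k c \<theta> p xb :: real
  assumes x: "x > 0" and \<eta>: "\<eta> > 0" "sqrt \<eta> \<le> x" and xb: "x \<le> xb"
    and r: "r \<le> - 2 * k * x\<^sup>2 + 2 * k * \<eta> + 2 * c * g * x"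
    and p: "p \<ge> 1" and \<theta>: "\<theta> > 0" and k: "k > 0" and c: "c \<ge> 0" and g: "g \<ge> 0"
  shows "(p / 2) * x powr (p - 2) * r \<le> - (p * k - c * (p - 1) * \<theta>) * x powr p
    + c * \<theta> powr (1 - p) * g powr p + p * k * sqrt \<eta> * xb powr (p - 1)"
proof -
  have "x powr (p - 2) * x powr 2 = x powr p" by (simp only: powr_add[symmetric]) simp
  then have x2: "x powr (p - 2) * x\<^sup>2 = x powr p" using x by (simp add: powr_numeral)
  have "x powr (p - 2) * x powr 1 = x powr (p - 1)" by (simp only: powr_add[symmetric]) simp
  then have x1: "x powr (p - 2) * x = x powr (p - 1)" using x by simp
  have "(p / 2) * x powr (p - 2) * r \<le> (p / 2) * x powr (p - 2) * (- 2 * k * x\<^sup>2 + 2 * k * \<eta> + 2 * c * g * x)"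
    using r p by (intro mult_left_mono) auto
  also have "\<dots> = - p * k * x powr p + p * k * (\<eta> * x powr (p - 2)) + c * (p * x powr (p - 1) * g)"
    by (simp add: algebra_simps flip: x1 x2)
  finally have rate: "(p / 2) * x powr (p - 2) * r
      \<le> - p * k * x powr p + p * k * (\<eta> * x powr (p - 2)) + c * (p * x powr (p - 1) * g)" .
  have "\<eta> * x powr (p - 2) \<le> sqrt \<eta> * (x powr (p - 2) * x)"
  proof -
    have "\<eta> = sqrt \<eta> * sqrt \<eta>" using \<eta> by simp
    also have "\<dots> \<le> sqrt \<eta> * x" using \<eta> by (intro mult_left_mono) auto
    finally show ?thesis
      using mult_right_mono[of \<eta> "sqrt \<eta> * x" "x powr (p - 2)"] by (simp add: mult_ac)
  qed
  also have "\<dots> \<le> sqrt \<eta> * xb powr (p - 1)"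
    unfolding x1 using x xb p \<eta> by (intro mult_left_mono powr_mono2) auto
  finally have "p * k * (\<eta> * x powr (p - 2)) + c * (p * x powr (p - 1) * g)
      \<le> p * k * (sqrt \<eta> * xb powr (p - 1)) + c * ((p - 1) * \<theta> * x powr p + \<theta> powr (1 - p) * g powr p)"
    using Young_powr_weighted[OF x g \<theta> p] k p c by (intro add_mono mult_left_mono) auto
  with rate show ?thesis by (simp add: algebra_simps)
qed

lemma set_integrable_trunc_norm_powr:
  fixes g :: "real \<Rightarrow> 'a::real_normed_vector"
  assumes "p > 0"
  shows "set_integrable lborel {0..} (\<lambda>t. norm (trunc \<tau> g t) powr p) \<longleftrightarrow>
    set_integrable lborel {0..\<tau>} (\<lambda>t. norm (g t) powr p)"
    and "(LINT t:{0..}|lborel. norm (trunc \<tau> g t) powr p) = (LINT t:{0..\<tau>}|lborel. norm (g t) powr p)"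
proof -
  have "(\<lambda>t. indicator {0..} t *\<^sub>R (norm (trunc \<tau> g t) powr p)) =
    (\<lambda>t. indicator {0..\<tau>} t *\<^sub>R (norm (g t) powr p))"
    using assms by (auto simp: indicator_def trunc_def)
  then show "set_integrable lborel {0..} (\<lambda>t. norm (trunc \<tau> g t) powr p) \<longleftrightarrow>
      set_integrable lborel {0..\<tau>} (\<lambda>t. norm (g t) powr p)"
    and "(LINT t:{0..}|lborel. norm (trunc \<tau> g t) powr p) = (LINT t:{0..\<tau>}|lborel. norm (g t) powr p)"
    unfolding set_integrable_def set_lebesgue_integral_def by simp_all
qed

lemma Lp_norm_trunc_eq_integral:
  fixes g :: "real \<Rightarrow> 'a::real_normed_vector"
  assumes "q > 0" and "set_integrable lborel {0..\<tau>} (\<lambda>t. norm (g t) powr q)"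
  shows "Lp_norm (ereal q) (trunc \<tau> g) = integral {0..\<tau>} (\<lambda>t. norm (g t) powr q) powr (1 / q)"
  using assms by (simp add: Lp_norm_def set_integrable_trunc_norm_powr(2) set_borel_integral_eq_integral(2))

section \<open>The SOS certificate\<close>

lemma continuous_on_Upsilon: "continuous_on S (Upsilon R)"
  unfolding Upsilon_def
  by (intro continuous_intros linear_continuous_on) (auto intro: bounded_linear_inner_left)

locale sos_certificate =
  fixes L P Q :: "real^'n^'n" and R :: "'n \<Rightarrow> real^'n^'n" and D :: "(real^'n) set"
    and \<delta> \<epsilon> :: real
  assumes energy: "\<And>x. x \<bullet> Upsilon R x = 0"
    and \<delta>_pos: "\<delta> > 0"
    and D_ball: "cball 0 \<delta> \<subseteq> D"
    and P_sym: "symmetric_mat P"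
    and \<epsilon>_pos: "\<epsilon> > 0"
    and Q_psd: "psd Q"
    and V_pos: "\<And>x. x \<in> D \<Longrightarrow> x \<bullet> (P *v x) - \<epsilon> * (x \<bullet> x) \<ge> 0"
    and V_dec: "\<And>x. x \<in> D \<Longrightarrow>
        - ((2 *\<^sub>R (P *v x)) \<bullet> (L *v x + Upsilon R x)
           + (\<delta>\<^sup>2 - x \<bullet> x) * (x \<bullet> (Q *v x)) + \<epsilon> * (x \<bullet> x)) \<ge> 0"
begin

abbreviation "lmin \<equiv> lambda_min P"
abbreviation "lmax \<equiv> lambda_max P"
abbreviation "cP \<equiv> spec_norm (2 *\<^sub>R P)"
abbreviation "V x \<equiv> x \<bullet> (P *v x)"
abbreviation "dV x \<equiv> (2 *\<^sub>R (P *v x)) \<bullet> (L *v x + Upsilon R x)"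
abbreviation "f_max \<equiv> lmin * \<epsilon> * \<delta> / (lmax * cP)"

lemma V_lower: "lmin * (norm x)\<^sup>2 \<le> V x"
  using symmetric_mat_lambda_min(2)[OF P_sym, of x] by (simp add: power2_norm_eq_inner)

lemma V_upper: "V x \<le> lmax * (norm x)\<^sup>2"
  using symmetric_mat_lambda_max[OF P_sym, of x] by (simp add: power2_norm_eq_inner)

lemma eps_le_lambda_min: "\<epsilon> \<le> lmin"
proof -
  obtain v where "v \<noteq> 0" "P *v v = lmin *\<^sub>R v"
    using symmetric_mat_lambda_min(1)[OF P_sym] by (auto simp: eigvals_def)
  define x where "x = (\<delta> / norm v) *\<^sub>R v"
  have "norm x = \<delta>" using \<open>v \<noteq> 0\<close> \<delta>_pos by (simp add: x_def)
  then have "x \<bullet> (P *v x) - \<epsilon> * (x \<bullet> x) \<ge> 0" using D_ball by (intro V_pos) auto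
  moreover have "P *v x = lmin *\<^sub>R x" using \<open>P *v v = lmin *\<^sub>R v\<close> by (simp add: x_def matrix_vector_mult_scaleR)
  ultimately have "(lmin - \<epsilon>) * (x \<bullet> x) \<ge> 0" by (simp add: algebra_simps)
  moreover have "x \<bullet> x > 0" using \<open>norm x = \<delta>\<close> \<delta>_pos by auto
  ultimately show ?thesis by (simp add: zero_le_mult_iff)
qed

lemma lambda_min_pos: "lmin > 0"
  using eps_le_lambda_min \<epsilon>_pos by simp

lemma lambda_max_pos: "lmax > 0"
  using lambda_min_pos lambda_min_le_lambda_max[OF P_sym] by simp

lemma V_nonneg: "V x \<ge> 0"
  using order_trans[OF _ V_lower[of x]] lambda_min_pos by simp

lemma inner_P_le_spec_norm: "(2 *\<^sub>R (P *v x)) \<bullet> y \<le> cP * norm x * norm y"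
  using matrix_vector_inner_le_spec_norm[of "2 *\<^sub>R P" x y] by (simp flip: scaleR_matrix_vector_assoc)

lemma spec_norm_pos: "cP > 0"
proof -
  obtain v where "v \<noteq> 0" "P *v v = lmin *\<^sub>R v"
    using symmetric_mat_lambda_min(1)[OF P_sym] by (auto simp: eigvals_def)
  then have "2 * lmin * (norm v)\<^sup>2 = (2 *\<^sub>R (P *v v)) \<bullet> v"
    by (simp add: power2_norm_eq_inner)
  also have "\<dots> \<le> cP * (norm v)\<^sup>2"
    using inner_P_le_spec_norm[of v v] by (simp add: power2_eq_square mult.assoc)
  finally have "2 * lmin \<le> cP" using \<open>v \<noteq> 0\<close> by simp
  then show ?thesis using lambda_min_pos by simp
qed

lemma dV_le_on_ball:
  assumes "norm x \<le> \<delta>"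
  shows "dV x \<le> - \<epsilon> * (norm x)\<^sup>2"
proof -
  have "x \<bullet> (Q *v x) \<ge> 0" using Q_psd by (simp add: psd_def)
  moreover have "\<delta>\<^sup>2 - x \<bullet> x \<ge> 0"
    using assms \<delta>_pos by (simp add: power2_norm_eq_inner[symmetric] power_mono)
  ultimately have "(\<delta>\<^sup>2 - x \<bullet> x) * (x \<bullet> (Q *v x)) \<ge> 0" by simp
  then show ?thesis using V_dec[of x] assms D_ball by (auto simp: power2_norm_eq_inner)
qed

text \<open>If all eigenvalues of \<open>P\<close> coincide, the energy-conserving nonlinearity drops out
  of \<open>dV\<close>, which becomes a quadratic form; its bound on the sphere of radius \<open>\<delta>\<close> then
  extends to all of space by homogeneity.\<close>
lemma dV_le_if_lambda_min_eq_max: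
  assumes eq: "lmin = lmax"
  shows "dV x \<le> - \<epsilon> * (norm x)\<^sup>2"
proof (cases "x = 0")
  case False
  have quadratic: "dV y = 2 * lmin * (y \<bullet> (L *v y))" for y
    using energy[of y] by (simp add: symmetric_mat_scalar_if_lambda_min_eq_max[OF P_sym eq] inner_add_right)
  define s where "s = \<delta> / norm x"
  have "s > 0" using False \<delta>_pos by (simp add: s_def)
  have "norm (s *\<^sub>R x) = \<delta>" using False \<delta>_pos by (simp add: s_def)
  have "s\<^sup>2 * dV x = dV (s *\<^sub>R x)"
    unfolding quadratic by (simp add: matrix_vector_mult_scaleR power2_eq_square)
  also have "\<dots> \<le> - \<epsilon> * \<delta>\<^sup>2"
    using dV_le_on_ball[of "s *\<^sub>R x"] \<open>norm (s *\<^sub>R x) = \<delta>\<close> by simp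
  also have "\<dots> = s\<^sup>2 * (- \<epsilon> * (norm x)\<^sup>2)"
    using False by (simp add: s_def power_divide)
  finally show ?thesis
    by (rule mult_left_le_imp_le) (use \<open>s > 0\<close> in simp)
qed simp

lemma forced_dV_nonpos:
  assumes level: "lmin * \<delta>\<^sup>2 \<le> V x" and decay: "dV x \<le> - \<epsilon> * (norm x)\<^sup>2"
  shows "dV x + cP * norm x * f_max \<le> 0"
proof -
  have "(lmin * \<delta> / lmax)\<^sup>2 = (lmin / lmax) * (lmin * \<delta>\<^sup>2 / lmax)"
    by (simp add: power2_eq_square)
  also have "\<dots> \<le> lmin * \<delta>\<^sup>2 / lmax"
    using lambda_min_le_lambda_max[OF P_sym] lambda_min_pos lambda_max_pos
    by (intro mult_left_le_one_le) auto
  also have "\<dots> \<le> (norm x)\<^sup>2"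
    using level V_upper[of x] lambda_max_pos by (simp add: field_simps)
  finally have "lmin * \<delta> / lmax \<le> norm x"
    using lambda_min_pos lambda_max_pos \<delta>_pos by (simp add: power2_le_iff_abs_le)
  then have "\<epsilon> * norm x * (lmin * \<delta> / lmax) \<le> \<epsilon> * norm x * norm x"
    using \<epsilon>_pos by (intro mult_left_mono) auto
  moreover have "cP * norm x * f_max = \<epsilon> * norm x * (lmin * \<delta> / lmax)"
    using spec_norm_pos by simp
  ultimately show ?thesis using decay by (simp add: power2_eq_square)
qed

lemma forced_dV_neg_on_sphere:
  assumes "lmin < lmax" and "norm x = \<delta>"
  shows "dV x + cP * norm x * f_max < 0"
proof -
  have "cP * norm x * f_max = \<epsilon> * \<delta>\<^sup>2 * (lmin / lmax)"
    using assms(2) spec_norm_pos by (simp add: power2_eq_square)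
  also have "\<dots> < \<epsilon> * \<delta>\<^sup>2 * 1"
    using assms(1) lambda_min_pos \<epsilon>_pos \<delta>_pos by (intro mult_strict_left_mono) auto
  finally show ?thesis using dV_le_on_ball[of x] assms(2) by simp
qed

text \<open>If \<open>lmin < lmax\<close>, the strict inequality on the sphere of radius \<open>\<delta>\<close> extends the
  bound from the ball to an open neighbourhood of it.\<close>
lemma eventually_forced_dV_nonpos:
  assumes "norm x0 \<le> \<delta>" and lim: "(g \<longlongrightarrow> x0) F"
  shows "\<forall>\<^sub>F u in F. lmin * \<delta>\<^sup>2 \<le> V (g u) \<longrightarrow> dV (g u) + cP * norm (g u) * f_max \<le> 0"
proof (cases "lmin = lmax")
  case True
  show ?thesis
    by (intro always_eventually allI impI forced_dV_nonpos dV_le_if_lambda_min_eq_max[OF True])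
next
  case False
  then have "lmin < lmax" using lambda_min_le_lambda_max[OF P_sym] by simp
  define N where "N = ball 0 \<delta> \<union> {x. dV x + cP * norm x * f_max < 0}"
  have "open N" unfolding N_def
    by (intro open_Un open_ball open_Collect_less continuous_intros continuous_on_Upsilon)
  moreover have "x0 \<in> N"
    using assms(1) forced_dV_neg_on_sphere[OF \<open>lmin < lmax\<close>] by (cases "norm x0 = \<delta>") (auto simp: N_def)
  ultimately have "\<forall>\<^sub>F u in F. g u \<in> N" using topological_tendstoD[OF lim] by blast
  then show ?thesis
  proof (rule eventually_mono, intro impI)
    fix u assume "g u \<in> N" and level: "lmin * \<delta>\<^sup>2 \<le> V (g u)"
    show "dV (g u) + cP * norm (g u) * f_max \<le> 0"
    proof (cases "norm (g u) < \<delta>")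
      case True
      then show ?thesis using forced_dV_nonpos[OF level dV_le_on_ball] by simp
    qed (use \<open>g u \<in> N\<close> in \<open>auto simp: N_def\<close>)
  qed
qed

lemma norm_le_if_V_le:
  assumes "V x \<le> lmin * r\<^sup>2" and "r \<ge> 0"
  shows "norm x \<le> r"
proof -
  have "lmin * (norm x)\<^sup>2 \<le> lmin * r\<^sup>2" using V_lower[of x] assms(1) by linarith
  then have "(norm x)\<^sup>2 \<le> r\<^sup>2" using lambda_min_pos by simp
  then show ?thesis using assms(2) by (simp add: power2_le_iff_abs_le)
qed

lemma norm_ge_if_V_ge:
  assumes "lmin * r\<^sup>2 \<le> V x"
  shows "(lmin / lmax) * r\<^sup>2 \<le> (norm x)\<^sup>2"
  using order_trans[OF assms V_upper] lambda_max_pos by (simp add: field_simps)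

text \<open>Along trajectories in the ball, \<open>sqrt V\<close> decays at rate \<open>\<kappa>\<close> and is driven by the
  forcing with gain \<open>\<mu>\<close>.\<close>
abbreviation "\<kappa> \<equiv> \<epsilon> / (2 * lmax)"
abbreviation "\<mu> \<equiv> cP / (2 * sqrt lmin)"

end

section \<open>Trajectories of the forced system\<close>

locale sos_trajectory = sos_certificate L P Q R D \<delta> \<epsilon>
  for L P Q :: "real^'n^'n" and R :: "'n \<Rightarrow> real^'n^'n" and D :: "(real^'n) set"
    and \<delta> \<epsilon> :: real +
  fixes a0 :: "real^'n" and \<tau> :: real and f a :: "real \<Rightarrow> real^'n"
  assumes a0_small: "norm a0 \<le> \<delta> * sqrt (lambda_min P / lambda_max P)"
    and \<tau>_nonneg: "\<tau> \<ge> 0"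
    and f_piecewise_cont: "piecewise_cont (trunc \<tau> f)"
    and f_small: "\<And>t. t \<in> {0..\<tau>} \<Longrightarrow>
      norm (f t) \<le> lambda_min P * \<epsilon> * \<delta> / (lambda_max P * spec_norm (2 *\<^sub>R P))"
    and a_cont: "continuous_on {0..\<tau>} a"
    and a_init: "a 0 = a0"
    and a_integral: "\<And>t. t \<in> {0..\<tau>} \<Longrightarrow>
      ((\<lambda>s. L *v a s + Upsilon R (a s) + f s) has_integral (a t - a0)) {0..t}"
begin

abbreviation "rate t \<equiv> (2 *\<^sub>R (P *v a t)) \<bullet> (L *v a t + Upsilon R (a t) + f t)"

lemma V_traj_derivative:
  obtains S where "finite S"
    "\<And>t. t \<in> {0<..<\<tau>} - S \<Longrightarrow> ((\<lambda>t. V (a t)) has_real_derivative rate t) (at t)"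
proof -
  obtain S where "finite S"
    and f_cont: "\<forall>t\<in>{0..\<tau>} - S. continuous (at t within {0..}) (trunc \<tau> f)"
    using f_piecewise_cont \<tau>_nonneg unfolding piecewise_cont_def by blast
  have field_cont: "continuous_on {0..\<tau>} (\<lambda>s. L *v a s + Upsilon R (a s))"
    by (intro continuous_on_add linear_continuous_on_compose[OF a_cont]
        continuous_on_compose2[OF continuous_on_Upsilon a_cont]) auto
  have "(a has_vector_derivative L *v a t + Upsilon R (a t) + f t) (at t)" if t: "t \<in> {0<..<\<tau>} - S" for t
  proof (rule has_vector_derivative_if_integral_eq)
    show "((\<lambda>s. L *v a s + Upsilon R (a s) + f s) has_integral (a u - a 0)) {0..u}" if "u \<in> {0..\<tau>}" for u
      using a_integral[OF that] by (simp add: a_init)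
    have "continuous (at t within {0..}) (trunc \<tau> f)" using f_cont t by auto
    then have "continuous (at t within {0..\<tau>}) (trunc \<tau> f)"
      by (rule continuous_within_subset) auto
    then have "continuous (at t within {0..\<tau>}) f"
      using continuous_transform_within[OF _ zero_less_one, of t "{0..\<tau>}" "trunc \<tau> f" f] t
      by (auto simp: trunc_def)
    moreover have "continuous (at t within {0..\<tau>}) (\<lambda>s. L *v a s + Upsilon R (a s))"
      using field_cont t by (simp add: continuous_on_eq_continuous_within)
    ultimately show "continuous (at t within {0..\<tau>}) (\<lambda>s. L *v a s + Upsilon R (a s) + f s)"
      using continuous_add by blast
  qed (use t in auto)
  then show ?thesis
    using that[OF \<open>finite S\<close>] has_real_derivative_quadratic_form[OF P_sym] by blast
qed

lemma V_traj_continuous: "continuous_on {0..\<tau>} (\<lambda>t. V (a t))"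
  by (intro continuous_intros a_cont linear_continuous_on_compose[OF a_cont]) simp

lemma rate_le: "rate t \<le> dV (a t) + cP * norm (a t) * norm (f t)"
  using inner_P_le_spec_norm[of "a t" "f t"] by (simp add: inner_add_right)

lemma rate_le_forced:
  assumes "t \<in> {0..\<tau>}"
  shows "rate t \<le> dV (a t) + cP * norm (a t) * f_max"
proof -
  have "cP * norm (a t) * norm (f t) \<le> cP * norm (a t) * f_max"
    using f_small[OF assms] spec_norm_pos by (intro mult_left_mono) auto
  then show ?thesis using rate_le[of t] by simp
qed

lemma V_init_le: "V a0 \<le> lmin * \<delta>\<^sup>2"
proof -
  have "(norm a0)\<^sup>2 \<le> (\<delta> * sqrt (lmin / lmax))\<^sup>2" by (rule power_mono[OF a0_small norm_ge_zero])
  also have "\<dots> = \<delta>\<^sup>2 * (lmin / lmax)"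
    using lambda_min_pos lambda_max_pos by (simp add: power_mult_distrib)
  finally have "(norm a0)\<^sup>2 \<le> \<delta>\<^sup>2 * (lmin / lmax)" .
  then show ?thesis
    using V_upper[of a0] lambda_max_pos by (simp add: field_simps)
qed

lemma V_traj_le: "t \<in> {0..\<tau>} \<Longrightarrow> V (a t) \<le> lmin * \<delta>\<^sup>2"
proof -
  obtain S where "finite S"
    and deriv: "\<And>t. t \<in> {0<..<\<tau>} - S \<Longrightarrow> ((\<lambda>t. V (a t)) has_real_derivative rate t) (at t)"
    using V_traj_derivative by blast
  show "t \<in> {0..\<tau>} \<Longrightarrow> V (a t) \<le> lmin * \<delta>\<^sup>2"
  proof (rule barrier_principle[OF V_traj_continuous \<open>finite S\<close> deriv])
    show "V (a 0) \<le> lmin * \<delta>\<^sup>2" using V_init_le by (simp add: a_init)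
  next
    fix s assume s: "s \<in> {0..<\<tau>}" and below: "\<And>u. u \<in> {0..s} \<Longrightarrow> V (a u) \<le> lmin * \<delta>\<^sup>2"
    have "norm (a s) \<le> \<delta>" using below[of s] s \<delta>_pos by (intro norm_le_if_V_le) auto
    moreover have "(a \<longlongrightarrow> a s) (at s within {0..\<tau>})"
      using a_cont s by (simp add: continuous_on_def)
    ultimately have "\<forall>\<^sub>F u in at s within {0..\<tau>}.
        lmin * \<delta>\<^sup>2 \<le> V (a u) \<longrightarrow> dV (a u) + cP * norm (a u) * f_max \<le> 0"
      by (rule eventually_forced_dV_nonpos)
    moreover have "\<forall>\<^sub>F u in at s within {0..\<tau>}. u \<in> {0..\<tau>}"
      by (simp add: eventually_at_filter)
    ultimately show "\<forall>\<^sub>F u in at s within {0..\<tau>}. lmin * \<delta>\<^sup>2 \<le> V (a u) \<longrightarrow> rate u \<le> 0"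
      by eventually_elim (use rate_le_forced in fastforce)
  qed
qed

lemma traj_norm_le: "t \<in> {0..\<tau>} \<Longrightarrow> norm (a t) \<le> \<delta>"
  using V_traj_le \<delta>_pos by (intro norm_le_if_V_le) auto

lemma rate_nonpos_above_level:
  assumes u: "u \<in> {0..\<tau>}" and f_le: "norm (f u) \<le> G" and "G \<ge> 0"
    and r: "(lmax * cP / (lmin * \<epsilon>)) * G \<le> r" and level: "lmin * r\<^sup>2 \<le> V (a u)"
  shows "rate u \<le> 0"
proof -
  have "(cP * G / \<epsilon>)\<^sup>2 = (cP * G / \<epsilon>)\<^sup>2 * 1" by simp
  also have "\<dots> \<le> (cP * G / \<epsilon>)\<^sup>2 * (lmax / lmin)"
    using lambda_min_le_lambda_max[OF P_sym] lambda_min_pos by (intro mult_left_mono) auto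
  also have "\<dots> = (lmin / lmax) * ((lmax * cP / (lmin * \<epsilon>)) * G)\<^sup>2"
    using lambda_min_pos lambda_max_pos by (simp add: power2_eq_square field_simps)
  also have "\<dots> \<le> (lmin / lmax) * r\<^sup>2"
    using r \<open>G \<ge> 0\<close> lambda_min_pos lambda_max_pos spec_norm_pos \<epsilon>_pos
    by (intro mult_left_mono power_mono) auto
  also have "\<dots> \<le> (norm (a u))\<^sup>2" by (rule norm_ge_if_V_ge[OF level])
  finally have "cP * G / \<epsilon> \<le> norm (a u)" by (rule power2_le_imp_le) simp
  then have "cP * G \<le> \<epsilon> * norm (a u)" using \<epsilon>_pos by (simp add: field_simps)
  then have "cP * norm (a u) * G \<le> \<epsilon> * (norm (a u))\<^sup>2"
    using mult_left_mono[of "cP * G" "\<epsilon> * norm (a u)" "norm (a u)"]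
    by (simp add: power2_eq_square mult_ac)
  moreover have "cP * norm (a u) * norm (f u) \<le> cP * norm (a u) * G"
    using f_le spec_norm_pos by (intro mult_left_mono) auto
  ultimately show ?thesis
    using rate_le[of u] dV_le_on_ball[OF traj_norm_le[OF u]] by simp
qed

lemma traj_norm_le_sup:
  assumes f_le: "\<And>t. t \<in> {0..\<tau>} \<Longrightarrow> norm (f t) \<le> G" and t: "t \<in> {0..\<tau>}"
  shows "norm (a t) \<le> (lmax * cP / (lmin * \<epsilon>)) * G + norm a0 * sqrt (lmax / lmin)"
proof -
  define r where "r = (lmax * cP / (lmin * \<epsilon>)) * G + sqrt (V a0 / lmin)"
  have "norm (f 0) \<le> G" using f_le \<tau>_nonneg by simp
  then have "G \<ge> 0" by (rule order_trans[OF norm_ge_zero])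
  then have "(lmax * cP / (lmin * \<epsilon>)) * G \<ge> 0"
    using lambda_max_pos spec_norm_pos lambda_min_pos \<epsilon>_pos by simp
  then have "r \<ge> (lmax * cP / (lmin * \<epsilon>)) * G" "r \<ge> 0"
    using V_nonneg lambda_min_pos by (simp_all add: r_def)
  obtain S where "finite S"
    and deriv: "\<And>t. t \<in> {0<..<\<tau>} - S \<Longrightarrow> ((\<lambda>t. V (a t)) has_real_derivative rate t) (at t)"
    using V_traj_derivative by blast
  have "V (a t) \<le> lmin * r\<^sup>2"
  proof (rule barrier_principle[OF V_traj_continuous \<open>finite S\<close> deriv _ _ t])
    have "V a0 = lmin * (sqrt (V a0 / lmin))\<^sup>2" using V_nonneg lambda_min_pos by simp
    also have "\<dots> \<le> lmin * r\<^sup>2"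
      using \<open>(lmax * cP / (lmin * \<epsilon>)) * G \<ge> 0\<close> lambda_min_pos V_nonneg
      by (intro mult_left_mono power_mono) (auto simp: r_def)
    finally show "V (a 0) \<le> lmin * r\<^sup>2" by (simp add: a_init)
    show "\<forall>\<^sub>F u in at s within {0..\<tau>}. lmin * r\<^sup>2 \<le> V (a u) \<longrightarrow> rate u \<le> 0" for s
      using rate_nonpos_above_level[OF _ f_le \<open>G \<ge> 0\<close> \<open>r \<ge> (lmax * cP / (lmin * \<epsilon>)) * G\<close>]
      by (auto simp: eventually_at_filter)
  qed
  then have "norm (a t) \<le> r" using \<open>r \<ge> 0\<close> by (rule norm_le_if_V_le)
  moreover have "sqrt (V a0 / lmin) \<le> norm a0 * sqrt (lmax / lmin)"
    using real_sqrt_le_mono[OF divide_right_mono[OF V_upper[of a0]]] lambda_min_pos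
    by (simp add: real_sqrt_mult real_sqrt_divide mult_ac)
  ultimately show ?thesis unfolding r_def by linarith
qed

lemma rate_le_regularized:
  assumes t: "t \<in> {0..\<tau>}" and \<eta>: "\<eta> > 0"
  shows "rate t \<le> - 2 * \<kappa> * (V (a t) + \<eta>) + 2 * \<kappa> * \<eta> + 2 * \<mu> * norm (f t) * sqrt (V (a t) + \<eta>)"
proof -
  have rate: "rate t \<le> - \<epsilon> * (norm (a t))\<^sup>2 + cP * norm (a t) * norm (f t)"
    using rate_le[of t] dV_le_on_ball[OF traj_norm_le[OF t]] by simp
  have decay: "2 * \<kappa> * V (a t) \<le> \<epsilon> * (norm (a t))\<^sup>2"
    using mult_left_mono[OF V_upper[of "a t"] less_imp_le[OF \<epsilon>_pos]] lambda_max_pos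
    by (simp add: field_simps)
  have "sqrt lmin * norm (a t) = sqrt (lmin * (norm (a t))\<^sup>2)"
    by (simp add: real_sqrt_mult)
  also have "\<dots> \<le> sqrt (V (a t) + \<eta>)"
    using V_lower[of "a t"] \<eta> by (intro real_sqrt_le_mono) simp
  finally have "sqrt lmin * norm (a t) \<le> sqrt (V (a t) + \<eta>)" .
  then have "cP * norm (f t) * (sqrt lmin * norm (a t)) / sqrt lmin
      \<le> cP * norm (f t) * sqrt (V (a t) + \<eta>) / sqrt lmin"
    using spec_norm_pos lambda_min_pos by (intro divide_right_mono mult_left_mono) auto
  then have "cP * norm (a t) * norm (f t) \<le> 2 * \<mu> * norm (f t) * sqrt (V (a t) + \<eta>)"
    using lambda_min_pos by (simp add: mult_ac)
  with rate decay show ?thesis by (simp add: algebra_simps)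
qed

lemma powr_V_rate_le:
  assumes t: "t \<in> {0..\<tau>}" and p: "p \<ge> 1" and \<eta>: "\<eta> \<in> {0<..1}" and \<theta>: "\<theta> > 0"
  shows "(p / 2) * (V (a t) + \<eta>) powr (p / 2 - 1) * rate t \<le>
    - (p * \<kappa> - \<mu> * (p - 1) * \<theta>) * (V (a t) + \<eta>) powr (p / 2)
    + \<mu> * \<theta> powr (1 - p) * norm (f t) powr p
    + p * \<kappa> * sqrt \<eta> * sqrt (lmax * \<delta>\<^sup>2 + 1) powr (p - 1)"
proof -
  define x where "x = sqrt (V (a t) + \<eta>)"
  have W: "V (a t) + \<eta> > 0" using V_nonneg[of "a t"] \<eta> by simp
  then have "x > 0" "x\<^sup>2 = V (a t) + \<eta>" by (simp_all add: x_def)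
  have "sqrt \<eta> \<le> x" unfolding x_def using V_nonneg[of "a t"] by (intro real_sqrt_le_mono) simp
  have "lmax * (norm (a t))\<^sup>2 \<le> lmax * \<delta>\<^sup>2"
    using power_mono[OF traj_norm_le[OF t] norm_ge_zero] lambda_max_pos by simp
  then have "V (a t) \<le> lmax * \<delta>\<^sup>2" using V_upper[of "a t"] by linarith
  then have "x \<le> sqrt (lmax * \<delta>\<^sup>2 + 1)" unfolding x_def using \<eta> by (intro real_sqrt_le_mono) simp
  have "(p / 2) * x powr (p - 2) * rate t \<le> - (p * \<kappa> - \<mu> * (p - 1) * \<theta>) * x powr p
      + \<mu> * \<theta> powr (1 - p) * norm (f t) powr p + p * \<kappa> * sqrt \<eta> * sqrt (lmax * \<delta>\<^sup>2 + 1) powr (p - 1)"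
  proof (rule powr_rate_bound[OF \<open>x > 0\<close> _ \<open>sqrt \<eta> \<le> x\<close> \<open>x \<le> sqrt (lmax * \<delta>\<^sup>2 + 1)\<close> _ p \<theta>])
    show "rate t \<le> - 2 * \<kappa> * x\<^sup>2 + 2 * \<kappa> * \<eta> + 2 * \<mu> * norm (f t) * x"
      using rate_le_regularized[OF t] \<eta> unfolding \<open>x\<^sup>2 = V (a t) + \<eta>\<close> by (simp add: x_def)
  qed (use \<eta> \<epsilon>_pos lambda_max_pos spec_norm_pos lambda_min_pos in auto)
  moreover have "x powr (p - 2) = (V (a t) + \<eta>) powr (p / 2 - 1)" "x powr p = (V (a t) + \<eta>) powr (p / 2)"
    using W by (simp_all add: x_def sqrt_powr diff_divide_distrib)
  ultimately show ?thesis by simp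
qed

text \<open>The regularisation \<open>\<eta> > 0\<close> makes \<open>(V + \<eta>)\<^bsup>p/2\<^esup>\<close> differentiable where the
  state vanishes.\<close>
lemma Lp_energy_estimate:
  assumes p: "p \<ge> 1" and \<eta>: "\<eta> \<in> {0<..1}" and \<theta>: "\<theta> > 0"
    and f_int: "(\<lambda>t. norm (f t) powr p) integrable_on {0..\<tau>}"
  shows "(p * \<kappa> - \<mu> * (p - 1) * \<theta>) * integral {0..\<tau>} (\<lambda>t. (V (a t) + \<eta>) powr (p / 2))
    \<le> (V a0 + \<eta>) powr (p / 2) + \<mu> * \<theta> powr (1 - p) * integral {0..\<tau>} (\<lambda>t. norm (f t) powr p)
      + \<tau> * (p * \<kappa> * sqrt \<eta> * sqrt (lmax * \<delta>\<^sup>2 + 1) powr (p - 1))"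
proof -
  define Z where "Z t = (V (a t) + \<eta>) powr (p / 2)" for t
  define E where "E = p * \<kappa> * sqrt \<eta> * sqrt (lmax * \<delta>\<^sup>2 + 1) powr (p - 1)"
  define A where "A = p * \<kappa> - \<mu> * (p - 1) * \<theta>"
  have W: "V (a t) + \<eta> > 0" for t using V_nonneg[of "a t"] \<eta> by simp
  obtain S where "finite S"
    and deriv: "\<And>t. t \<in> {0<..<\<tau>} - S \<Longrightarrow> ((\<lambda>t. V (a t)) has_real_derivative rate t) (at t)"
    using V_traj_derivative by blast
  have "(Z has_real_derivative (p / 2) * (V (a t) + \<eta>) powr (p / 2 - 1) * rate t) (at t)"
    if "t \<in> {0<..<\<tau>} - S" for t
  proof -
    have "((\<lambda>t. V (a t) + \<eta>) has_real_derivative rate t) (at t)"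
      using DERIV_add[OF deriv[OF that] DERIV_const[of \<eta>]] by simp
    from DERIV_fun_powr[OF this W, of "p / 2"] show ?thesis by (simp add: Z_def[abs_def])
  qed
  moreover have "continuous_on {0..\<tau>} Z"
    unfolding Z_def using W by (intro continuous_intros V_traj_continuous) (auto simp: less_imp_neq[symmetric])
  ultimately have "((\<lambda>t. (p / 2) * (V (a t) + \<eta>) powr (p / 2 - 1) * rate t) has_integral (Z \<tau> - Z 0)) {0..\<tau>}"
    using \<tau>_nonneg
    by (intro fundamental_theorem_of_calculus_interior_strong[OF \<open>finite S\<close>])
      (auto simp: has_real_derivative_iff_has_vector_derivative)
  moreover have "((\<lambda>t. - A * Z t + \<mu> * \<theta> powr (1 - p) * norm (f t) powr p + E) has_integral
      - A * integral {0..\<tau>} Z + \<mu> * \<theta> powr (1 - p) * integral {0..\<tau>} (\<lambda>t. norm (f t) powr p) + \<tau> * E) {0..\<tau>}"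
    using integrable_continuous_interval[OF \<open>continuous_on {0..\<tau>} Z\<close>] f_int
      has_integral_const_real[of E 0 \<tau>] \<tau>_nonneg
    by (intro has_integral_add has_integral_mult_right) (auto simp: has_integral_integral)
  ultimately have "Z \<tau> - Z 0 \<le> - A * integral {0..\<tau>} Z
      + \<mu> * \<theta> powr (1 - p) * integral {0..\<tau>} (\<lambda>t. norm (f t) powr p) + \<tau> * E"
    by (rule has_integral_le) (use powr_V_rate_le[OF _ p \<eta> \<theta>] in \<open>simp add: Z_def A_def E_def\<close>)
  moreover have "Z \<tau> \<ge> 0" by (simp add: Z_def)
  ultimately have "A * integral {0..\<tau>} Z
      \<le> Z 0 + \<mu> * \<theta> powr (1 - p) * integral {0..\<tau>} (\<lambda>t. norm (f t) powr p) + \<tau> * E"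
    by linarith
  then show ?thesis by (simp add: Z_def[abs_def] A_def E_def a_init)
qed

lemma integral_norm_powr_le:
  assumes p: "p > 0" and \<eta>: "\<eta> > 0"
  shows "lmin powr (p / 2) * integral {0..\<tau>} (\<lambda>t. norm (a t) powr p)
    \<le> integral {0..\<tau>} (\<lambda>t. (V (a t) + \<eta>) powr (p / 2))"
proof -
  have W: "V (a t) + \<eta> > 0" for t using V_nonneg[of "a t"] \<eta> by simp
  have "lmin powr (p / 2) * integral {0..\<tau>} (\<lambda>t. norm (a t) powr p)
      = integral {0..\<tau>} (\<lambda>t. lmin powr (p / 2) * norm (a t) powr p)"
    by simp
  also have "\<dots> \<le> integral {0..\<tau>} (\<lambda>t. (V (a t) + \<eta>) powr (p / 2))"
  proof (rule integral_le)
    show "(\<lambda>t. lmin powr (p / 2) * norm (a t) powr p) integrable_on {0..\<tau>}"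
      using p by (intro integrable_continuous_interval continuous_intros continuous_on_powr' a_cont) auto
    show "(\<lambda>t. (V (a t) + \<eta>) powr (p / 2)) integrable_on {0..\<tau>}"
      using W by (intro integrable_continuous_interval continuous_intros V_traj_continuous)
        (auto simp: less_imp_neq[symmetric])
    fix t
    have "lmin powr (p / 2) * norm (a t) powr p = (lmin * (norm (a t))\<^sup>2) powr (p / 2)"
      using lambda_min_pos sqrt_powr[of "(norm (a t))\<^sup>2" p] by (simp add: powr_mult)
    also have "\<dots> \<le> (V (a t) + \<eta>) powr (p / 2)"
      using V_lower[of "a t"] \<eta> lambda_min_pos p by (intro powr_mono2) auto
    finally show "lmin powr (p / 2) * norm (a t) powr p \<le> (V (a t) + \<eta>) powr (p / 2)" .
  qed
  finally show ?thesis .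
qed

lemma Lp_bound_regularized:
  assumes p: "p \<ge> 1" and \<eta>: "\<eta> \<in> {0<..1}"
    and f_int: "(\<lambda>t. norm (f t) powr p) integrable_on {0..\<tau>}"
  defines "G \<equiv> integral {0..\<tau>} (\<lambda>t. norm (f t) powr p) powr (1 / p)"
    and "\<rho>0 \<equiv> (2 * lmax / (\<epsilon> * p)) powr (1 / p)"
  shows "lmin powr (p / 2) * integral {0..\<tau>} (\<lambda>t. norm (a t) powr p)
    \<le> (\<mu> * G / \<kappa> + \<eta> + sqrt (V a0 + \<eta>) * \<rho>0) powr p
      + p * sqrt \<eta> * sqrt (lmax * \<delta>\<^sup>2 + 1) powr (p - 1) * \<tau>"
proof -
  define B where "B = sqrt (V a0 + \<eta>) * \<rho>0"
  define R where "R = \<tau> * (p * \<kappa> * sqrt \<eta> * sqrt (lmax * \<delta>\<^sup>2 + 1) powr (p - 1))"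
  have "\<kappa> > 0" "\<mu> > 0" using \<epsilon>_pos lambda_max_pos spec_norm_pos lambda_min_pos by simp_all
  have "B \<ge> 0" "R \<ge> 0" "G \<ge> 0" using V_nonneg[of a0] \<eta> \<tau>_nonneg p \<epsilon>_pos lambda_max_pos
    by (simp_all add: B_def R_def G_def \<rho>0_def)
  have G_powr: "G powr p = integral {0..\<tau>} (\<lambda>t. norm (f t) powr p)"
    using integral_nonneg[OF f_int] p by (simp add: G_def powr_powr)
  have "B powr p = (V a0 + \<eta>) powr (p / 2) * (2 * lmax / (\<epsilon> * p))"
    using V_nonneg[of a0] \<eta> p \<epsilon>_pos lambda_max_pos
    by (simp add: B_def \<rho>0_def powr_mult sqrt_powr powr_powr)
  then have Z0: "(V a0 + \<eta>) powr (p / 2) = \<kappa> * p * B powr p"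
    using p \<epsilon>_pos lambda_max_pos by (simp add: field_simps)
  have "integral {0..\<tau>} (\<lambda>t. (V (a t) + \<eta>) powr (p / 2)) \<le> (\<mu> * G / \<kappa> + \<eta> + B) powr p + R / \<kappa>"
  proof (rule le_powr_if_weighted_estimates[OF \<open>\<kappa> > 0\<close> \<open>\<mu> > 0\<close> p \<open>B \<ge> 0\<close> \<open>G \<ge> 0\<close> \<open>R \<ge> 0\<close>])
    show "\<eta> > 0" using \<eta> by simp
    fix \<theta> :: real assume "\<theta> > 0"
    show "(p * \<kappa> - \<mu> * (p - 1) * \<theta>) * integral {0..\<tau>} (\<lambda>t. (V (a t) + \<eta>) powr (p / 2))
        \<le> \<kappa> * p * B powr p + \<mu> * \<theta> powr (1 - p) * G powr p + R"
      using Lp_energy_estimate[OF p \<eta> \<open>\<theta> > 0\<close> f_int] unfolding G_powr Z0 R_def .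
  qed
  moreover have "R / \<kappa> = p * sqrt \<eta> * sqrt (lmax * \<delta>\<^sup>2 + 1) powr (p - 1) * \<tau>"
    using \<epsilon>_pos lambda_max_pos by (simp add: R_def field_simps)
  ultimately show ?thesis
    using integral_norm_powr_le[of p \<eta>] p \<eta> by (simp add: B_def)
qed

lemma Lp_bound_limit:
  assumes p: "p \<ge> 1" and f_int: "(\<lambda>t. norm (f t) powr p) integrable_on {0..\<tau>}"
  defines "G \<equiv> integral {0..\<tau>} (\<lambda>t. norm (f t) powr p) powr (1 / p)"
    and "\<rho>0 \<equiv> (2 * lmax / (\<epsilon> * p)) powr (1 / p)"
  shows "lmin powr (p / 2) * integral {0..\<tau>} (\<lambda>t. norm (a t) powr p)
    \<le> (\<mu> * G / \<kappa> + sqrt (V a0) * \<rho>0) powr p"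
proof -
  define xb where "xb = sqrt (lmax * \<delta>\<^sup>2 + 1)"
  define base where "base \<eta> = \<mu> * G / \<kappa> + \<eta> + sqrt (V a0 + \<eta>) * \<rho>0" for \<eta>
  have "\<mu> * G / \<kappa> \<ge> 0" "\<rho>0 \<ge> 0"
    using \<epsilon>_pos lambda_max_pos spec_norm_pos lambda_min_pos by (simp_all add: G_def \<rho>0_def)
  have "\<forall>\<^sub>F \<eta> in at_right 0. lmin powr (p / 2) * integral {0..\<tau>} (\<lambda>t. norm (a t) powr p)
      \<le> base \<eta> powr p + p * sqrt \<eta> * xb powr (p - 1) * \<tau>"
    unfolding eventually_at_right_field
    using Lp_bound_regularized[OF p _ f_int]
    by (auto simp: G_def \<rho>0_def xb_def base_def intro!: exI[of _ 1])
  moreover have "((\<lambda>\<eta>. base \<eta> powr p + p * sqrt \<eta> * xb powr (p - 1) * \<tau>) \<longlongrightarrow> base 0 powr p) (at_right 0)"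
  proof -
    have "\<forall>\<^sub>F \<eta> in at_right 0. base \<eta> \<ge> 0"
      using eventually_at_right_less[of 0] by eventually_elim
        (use \<open>\<mu> * G / \<kappa> \<ge> 0\<close> \<open>\<rho>0 \<ge> 0\<close> V_nonneg[of a0] in \<open>auto simp: base_def\<close>)
    moreover have "(base \<longlongrightarrow> base 0) (at_right 0)"
      unfolding base_def by (intro tendsto_intros)
    ultimately have "((\<lambda>\<eta>. base \<eta> powr p) \<longlongrightarrow> base 0 powr p) (at_right 0)"
      using p by (intro tendsto_powr') auto
    moreover have "((\<lambda>\<eta>. p * sqrt \<eta> * xb powr (p - 1) * \<tau>) \<longlongrightarrow> p * sqrt 0 * xb powr (p - 1) * \<tau>) (at_right 0)"
      by (intro tendsto_intros)
    ultimately show ?thesis using tendsto_add by fastforce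
  qed
  ultimately show ?thesis
    by (intro tendsto_lowerbound) (auto simp: base_def)
qed

lemma Lp_bound:
  assumes p: "p \<ge> 1" and f_int: "(\<lambda>t. norm (f t) powr p) integrable_on {0..\<tau>}"
  shows "integral {0..\<tau>} (\<lambda>t. norm (a t) powr p) \<le>
    ((lmax * cP / (lmin * \<epsilon>)) * integral {0..\<tau>} (\<lambda>t. norm (f t) powr p) powr (1 / p)
      + norm a0 * sqrt (lmax / lmin) * (2 * lmax / (\<epsilon> * p)) powr (1 / p)) powr p"
proof -
  define G where "G = integral {0..\<tau>} (\<lambda>t. norm (f t) powr p) powr (1 / p)"
  define \<rho>0 where "\<rho>0 = (2 * lmax / (\<epsilon> * p)) powr (1 / p)"
  define base where "base = \<mu> * G / \<kappa> + sqrt (V a0) * \<rho>0"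
  have "\<mu> * G / \<kappa> \<ge> 0" "\<rho>0 \<ge> 0"
    using \<epsilon>_pos lambda_max_pos spec_norm_pos lambda_min_pos by (simp_all add: G_def \<rho>0_def)
  then have "base \<ge> 0" using V_nonneg[of a0] by (simp add: base_def)
  have X: "integral {0..\<tau>} (\<lambda>t. norm (a t) powr p) \<le> (base / sqrt lmin) powr p"
    using Lp_bound_limit[OF p f_int] lambda_min_pos \<open>base \<ge> 0\<close>
    by (simp add: base_def G_def \<rho>0_def powr_divide sqrt_powr field_simps)
  have "base / sqrt lmin \<le> (lmax * cP / (lmin * \<epsilon>)) * G + norm a0 * sqrt (lmax / lmin) * \<rho>0"
  proof -
    have "\<mu> * G / \<kappa> / sqrt lmin = (lmax * cP / (lmin * \<epsilon>)) * G"
      using lambda_min_pos \<epsilon>_pos lambda_max_pos by (simp add: field_simps)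
    moreover have "sqrt (V a0) / sqrt lmin \<le> norm a0 * sqrt (lmax / lmin)"
      using real_sqrt_le_mono[OF V_upper[of a0]] lambda_min_pos
      by (simp add: real_sqrt_mult real_sqrt_divide divide_right_mono mult.commute)
    then have "sqrt (V a0) * \<rho>0 / sqrt lmin \<le> norm a0 * sqrt (lmax / lmin) * \<rho>0"
      using mult_right_mono[OF _ \<open>\<rho>0 \<ge> 0\<close>] by fastforce
    ultimately show ?thesis by (simp add: base_def add_divide_distrib)
  qed
  then have "(base / sqrt lmin) powr p
      \<le> ((lmax * cP / (lmin * \<epsilon>)) * G + norm a0 * sqrt (lmax / lmin) * \<rho>0) powr p"
    using \<open>base \<ge> 0\<close> lambda_min_pos p by (intro powr_mono2) auto
  with X show ?thesis by (simp add: G_def \<rho>0_def)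
qed

lemma Linfty_norm_trunc_le:
  assumes "in_Lp \<infinity> (trunc \<tau> f)"
  shows "Lp_norm \<infinity> (trunc \<tau> a) \<le> (lmax * cP / (lmin * \<epsilon>)) * Lp_norm \<infinity> (trunc \<tau> f)
    + norm a0 * sqrt (lmax / lmin) * rho \<infinity> lmax \<epsilon>"
proof -
  define G where "G = Sup ((\<lambda>t. norm (trunc \<tau> f t)) ` {0..})"
  define r where "r = (lmax * cP / (lmin * \<epsilon>)) * G + norm a0 * sqrt (lmax / lmin)"
  have bdd: "bdd_above ((\<lambda>t. norm (trunc \<tau> f t)) ` {0..})" using assms by (simp add: in_Lp_def)
  have f_le: "norm (f t) \<le> G" if "t \<in> {0..\<tau>}" for t
  proof -
    have "norm (trunc \<tau> f t) \<le> G" unfolding G_def by (rule cSup_upper[OF _ bdd]) (use that in auto)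
    then show ?thesis using that by (simp add: trunc_def)
  qed
  have a_le: "norm (a t) \<le> r" if "t \<in> {0..\<tau>}" for t
    using traj_norm_le_sup[OF f_le that] by (simp add: r_def)
  then have "r \<ge> 0" using \<tau>_nonneg order_trans[OF norm_ge_zero] by force
  have "Sup ((\<lambda>t. norm (trunc \<tau> a t)) ` {0..}) \<le> r"
    by (rule cSup_least) (use a_le \<open>r \<ge> 0\<close> in \<open>auto simp: trunc_def\<close>)
  then show ?thesis by (simp add: Lp_norm_def rho_def G_def r_def)
qed

lemma Lp_norm_trunc_le_finite:
  assumes "q \<ge> 1" and "in_Lp (ereal q) (trunc \<tau> f)"
  shows "Lp_norm (ereal q) (trunc \<tau> a) \<le> (lmax * cP / (lmin * \<epsilon>)) * Lp_norm (ereal q) (trunc \<tau> f)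
    + norm a0 * sqrt (lmax / lmin) * rho (ereal q) lmax \<epsilon>"
proof -
  have f_int: "set_integrable lborel {0..\<tau>} (\<lambda>t. norm (f t) powr q)"
    using assms by (simp add: in_Lp_def set_integrable_trunc_norm_powr(1))
  have a_int: "set_integrable lborel {0..\<tau>} (\<lambda>t. norm (a t) powr q)"
    using assms(1) by (intro borel_integrable_atLeastAtMost' continuous_on_powr' continuous_intros a_cont) auto
  define Y where "Y = (lmax * cP / (lmin * \<epsilon>)) * integral {0..\<tau>} (\<lambda>t. norm (f t) powr q) powr (1 / q)
    + norm a0 * sqrt (lmax / lmin) * (2 * lmax / (\<epsilon> * q)) powr (1 / q)"
  have "Y \<ge> 0" using lambda_max_pos spec_norm_pos lambda_min_pos \<epsilon>_pos by (simp add: Y_def)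
  have "integral {0..\<tau>} (\<lambda>t. norm (a t) powr q) powr (1 / q) \<le> (Y powr q) powr (1 / q)"
    using Lp_bound[OF assms(1) set_borel_integral_eq_integral(1)[OF f_int]] assms(1)
    by (intro powr_mono2) (auto simp: Y_def intro: integral_nonneg[OF set_borel_integral_eq_integral(1)[OF a_int]])
  also have "\<dots> = Y" using \<open>Y \<ge> 0\<close> assms(1) by (simp add: powr_powr)
  finally show ?thesis
    using assms(1) by (simp add: Lp_norm_trunc_eq_integral f_int a_int rho_def Y_def)
qed

lemma Lp_norm_trunc_le:
  assumes "1 \<le> p" and "in_Lp p (trunc \<tau> f)"
  shows "Lp_norm p (trunc \<tau> a) \<le> (lmax * cP / (lmin * \<epsilon>)) * Lp_norm p (trunc \<tau> f)
    + norm a0 * sqrt (lmax / lmin) * rho p lmax \<epsilon>"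
  using assms Linfty_norm_trunc_le Lp_norm_trunc_le_finite by (cases p) auto

end

theorem theorem3:
  fixes L P Q :: "real^'n^'n"
    and R :: "'n \<Rightarrow> real^'n^'n"
    and D :: "(real^'n) set"
    and \<delta> \<epsilon> :: real
  assumes hurwitz: "hurwitz L"
    and R_sym: "\<And>m. symmetric_mat (R m)"
    and energy: "\<And>a. a \<bullet> Upsilon R a = 0"
    and \<delta>_pos: "\<delta> > 0"
    and D_ball: "cball 0 \<delta> \<subseteq> D"
    and P_sym: "symmetric_mat P"
    and \<epsilon>_pos: "\<epsilon> > 0"
    and Q_psd: "psd Q"
    and V_pos: "\<And>a. a \<in> D \<Longrightarrow> a \<bullet> (P *v a) - \<epsilon> * (a \<bullet> a) \<ge> 0"
    and V_dec: "\<And>a. a \<in> D \<Longrightarrow>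
        - ((2 *\<^sub>R (P *v a)) \<bullet> (L *v a + Upsilon R a)
           + (\<delta>\<^sup>2 - a \<bullet> a) * (a \<bullet> (Q *v a)) + \<epsilon> * (a \<bullet> a)) \<ge> 0"
  shows "\<forall>a0 :: real^'n. norm a0 \<le> \<delta> * sqrt (lambda_min P / lambda_max P) \<longrightarrow>
    (\<forall>p::ereal. 1 \<le> p \<longrightarrow>
    (\<forall>\<tau>::real. \<forall>f :: real \<Rightarrow> real^'n. \<forall>a :: real \<Rightarrow> real^'n.
       \<tau> \<ge> 0 \<longrightarrow> in_Lpe p f \<longrightarrow>
       (\<forall>t\<in>{0..\<tau>}. norm (f t) \<le> lambda_min P * \<epsilon> * \<delta> / (lambda_max P * spec_norm (2 *\<^sub>R P))) \<longrightarrow>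
       continuous_on {0..\<tau>} a \<longrightarrow> a 0 = a0 \<longrightarrow>
       (\<forall>t\<in>{0..\<tau>}. ((\<lambda>s. L *v a s + Upsilon R (a s) + f s) has_integral (a t - a0)) {0..t}) \<longrightarrow>
       (\<forall>t\<in>{0..\<tau>}. norm (a t) \<le> \<delta>) \<and>
       Lp_norm p (trunc \<tau> a) \<le>
         (lambda_max P * spec_norm (2 *\<^sub>R P) / (lambda_min P * \<epsilon>)) * Lp_norm p (trunc \<tau> f)
         + norm a0 * sqrt (lambda_max P / lambda_min P) * rho p (lambda_max P) \<epsilon>))"
proof (intro allI impI)
  fix a0 :: "real^'n" and p :: ereal and \<tau> :: real and f a :: "real \<Rightarrow> real^'n"
  assume a0: "norm a0 \<le> \<delta> * sqrt (lambda_min P / lambda_max P)" and p: "1 \<le> p"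
    and \<tau>: "\<tau> \<ge> 0" and f_Lpe: "in_Lpe p f"
    and f_small: "\<forall>t\<in>{0..\<tau>}. norm (f t) \<le> lambda_min P * \<epsilon> * \<delta> / (lambda_max P * spec_norm (2 *\<^sub>R P))"
    and a_cont: "continuous_on {0..\<tau>} a" and a_init: "a 0 = a0"
    and a_integral: "\<forall>t\<in>{0..\<tau>}. ((\<lambda>s. L *v a s + Upsilon R (a s) + f s) has_integral (a t - a0)) {0..t}"
  have f_Lp: "in_Lp p (trunc \<tau> f)" using f_Lpe \<tau> by (simp add: in_Lpe_def)
  interpret sos_trajectory L P Q R D \<delta> \<epsilon> a0 \<tau> f a
    using energy \<delta>_pos D_ball P_sym \<epsilon>_pos Q_psd V_pos V_dec a0 \<tau> f_Lp f_small a_cont a_init a_integral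
    by unfold_locales (auto simp: in_Lp_def)
  show "(\<forall>t\<in>{0..\<tau>}. norm (a t) \<le> \<delta>) \<and>
    Lp_norm p (trunc \<tau> a) \<le>
      (lambda_max P * spec_norm (2 *\<^sub>R P) / (lambda_min P * \<epsilon>)) * Lp_norm p (trunc \<tau> f)
      + norm a0 * sqrt (lambda_max P / lambda_min P) * rho p (lambda_max P) \<epsilon>"
    using traj_norm_le Lp_norm_trunc_le[OF p f_Lp] by blast
qed

end
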